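(* Let $n\ge 1$ and $a\ge 0$ be integers with $a\le n$. Then \[ \sum_{l=0}^{a}(1-l)\,e_l\,X_{P_{n-l}}=\begin{cases}X_{K_{a+1}^{n-1-a}}\big/a!, & \text{if } a\le n-1,\\ e_n, & \text{if } a=n.\end{cases} \]
   Context: The chromatic symmetric function of a finite simple graph $G$ is $X_G=\sum_{\kappa}\prod_{v\in V(G)}x_{\kappa(v)}$, where $\kappa$ ranges over proper colorings $\kappa:V(G)\to\{1,2,\dots\}$; the empty graph has $X=1$. $e_l$ is the $l$-th elementary symmetric function, $e_0=1$. $P_j$ is the path on $j$ vertices ($P_0$ empty). $K_{s}^{t}$ is the lollipop: the complete graph $K_s$ with a pendant path of length $t$ (with $t$ new vertices) attached at one vertex. *)

theory Defs
  imports Complex_Main "HOL-Library.Poly_Mapping" "HOL-Library.FuncSet"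
begin

(* A symmetric function (formal power series in the variables x_0, x_1, ...)
   is represented by its coefficient function on monomials; a monomial
   x^alpha is given by a finitely supported exponent vector alpha. *)
type_synonym sf = "(nat \<Rightarrow>\<^sub>0 nat) \<Rightarrow> rat"

definition sf_mult :: "sf \<Rightarrow> sf \<Rightarrow> sf" where
  "sf_mult f g = (\<lambda>\<alpha>. \<Sum>p\<in>{(\<beta>, \<gamma>). \<beta> + \<gamma> = \<alpha>}. f (fst p) * g (snd p))"

definition elem_sf :: "nat \<Rightarrow> sf" where
  "elem_sf l = (\<lambda>\<alpha>. if (\<forall>i. Poly_Mapping.lookup \<alpha> i \<le> 1) \<and> (\<Sum>i\<in>Poly_Mapping.keys \<alpha>. Poly_Mapping.lookup \<alpha> i) = l
                     then 1 else 0)"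

definition proper_col :: "'v set \<Rightarrow> ('v \<Rightarrow> 'v \<Rightarrow> bool) \<Rightarrow> ('v \<Rightarrow> nat) \<Rightarrow> bool" where
  "proper_col V E \<kappa> \<longleftrightarrow> (\<forall>u\<in>V. \<forall>v\<in>V. E u v \<longrightarrow> \<kappa> u \<noteq> \<kappa> v)"

definition chrom_sf :: "'v set \<Rightarrow> ('v \<Rightarrow> 'v \<Rightarrow> bool) \<Rightarrow> sf" where
  "chrom_sf V E = (\<lambda>\<alpha>. of_nat (card {\<kappa> \<in> V \<rightarrow>\<^sub>E (UNIV :: nat set).
        proper_col V E \<kappa> \<and> (\<forall>i. card {v\<in>V. \<kappa> v = i} = Poly_Mapping.lookup \<alpha> i)}))"

definition path_V :: "nat \<Rightarrow> nat set" where
  "path_V j = {0..<j}"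

definition path_E :: "nat \<Rightarrow> nat \<Rightarrow> bool" where
  "path_E u v \<longleftrightarrow> u = v + 1 \<or> v = u + 1"

(* lollipop K_s^t: clique on 0..s-1, pendant path s-1, s, ..., s+t-1 *)
definition lollipop_V :: "nat \<Rightarrow> nat \<Rightarrow> nat set" where
  "lollipop_V s t = {0..<s+t}"

definition lollipop_E :: "nat \<Rightarrow> nat \<Rightarrow> nat \<Rightarrow> bool" where
  "lollipop_E s u v \<longleftrightarrow> (u < s \<and> v < s \<and> u \<noteq> v) \<or> ((u = v + 1 \<or> v = u + 1) \<and> max u v \<ge> s)"

end

theory Submission
  imports Defs "HOL-Combinatorics.Permutations"
begin

(* Let W_l be the disjoint union of K_l and P_(n-l) on the vertices 0, ..., n - 1. Since X is
   multiplicative on disjoint unions and X_(K_l) = l! e_l, the l-th summand equals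
   (1 - l) X_(W_l) / l!.
   The lollipop K_(l+1)^(n-l-1) is W_l plus the edges from vertex l to the clique, and
   K_l^(n-l) is W_l plus the single edge {l - 1, l}. In a proper colouring of W_l, vertex l
   shares its colour with at most one clique vertex, and by the symmetry of the clique each
   clique vertex does so in equally many colourings. Counting gives
   X_(K_(l+1)^(n-l-1)) = l X_(K_l^(n-l)) - (l - 1) X_(W_l), so the sum telescopes to
   X_(K_(a+1)^(n-1-a)) / a!. For a = n, the last two terms combine because
   K_n^0 = W_n = K_n. *)

definition join_on :: "'a set \<Rightarrow> ('a \<Rightarrow> 'b) \<Rightarrow> ('a \<Rightarrow> 'b) \<Rightarrow> 'a \<Rightarrow> 'b" where
  "join_on A f g v = (if v \<in> A then f v else g v)"

lemma join_on_restrict: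
  assumes "f \<in> (A \<union> B) \<rightarrow>\<^sub>E C"
  shows "join_on A (restrict f A) (restrict f B) = f"
proof
  fix v
  show "join_on A (restrict f A) (restrict f B) v = f v"
    using PiE_arb[OF assms, of v] by (auto simp: join_on_def)
qed

lemma restrict_join_on:
  assumes "A \<inter> B = {}" "f \<in> A \<rightarrow>\<^sub>E C" "g \<in> B \<rightarrow>\<^sub>E D"
  shows "restrict (join_on A f g) A = f" "restrict (join_on A f g) B = g"
  using assms PiE_arb[OF assms(2)] PiE_arb[OF assms(3)] by (auto simp: join_on_def fun_eq_iff)

lemma join_on_PiE:
  assumes "f \<in> A \<rightarrow>\<^sub>E C" "g \<in> B \<rightarrow>\<^sub>E C"
  shows "join_on A f g \<in> (A \<union> B) \<rightarrow>\<^sub>E C"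
  using assms PiE_arb[OF assms(2)] by (auto simp: join_on_def PiE_iff extensional_def)

lemma bij_betw_permutes_PiE:
  assumes f\<^sub>0: "bij_betw f\<^sub>0 A B"
  shows "bij_betw (\<lambda>p. restrict (f\<^sub>0 \<circ> p) A) {p. p permutes A} {f \<in> A \<rightarrow>\<^sub>E B. bij_betw f A B}"
proof -
  let ?g\<^sub>0 = "inv_into A f\<^sub>0"
  let ?to_perm = "\<lambda>f v. if v \<in> A then ?g\<^sub>0 (f v) else v"
  show ?thesis
  proof (rule bij_betw_byWitness[where f' = ?to_perm])
    show "\<forall>p\<in>{p. p permutes A}. ?to_perm (restrict (f\<^sub>0 \<circ> p) A) = p"
      using bij_betw_inv_into_left[OF f\<^sub>0] permutes_in_image permutes_not_in
      by (fastforce simp: fun_eq_iff)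
    show "\<forall>f\<in>{f \<in> A \<rightarrow>\<^sub>E B. bij_betw f A B}. restrict (f\<^sub>0 \<circ> ?to_perm f) A = f"
    proof (intro ballI ext)
      fix f v
      assume "f \<in> {f \<in> A \<rightarrow>\<^sub>E B. bij_betw f A B}"
      then show "restrict (f\<^sub>0 \<circ> ?to_perm f) A v = f v"
        using bij_betw_inv_into_right[OF f\<^sub>0] PiE_arb[of f A "\<lambda>_. B" v] by (cases "v \<in> A") auto
    qed
    show "(\<lambda>p. restrict (f\<^sub>0 \<circ> p) A) ` {p. p permutes A} \<subseteq> {f \<in> A \<rightarrow>\<^sub>E B. bij_betw f A B}"
    proof (rule image_subsetI)
      fix p
      assume "p \<in> {p. p permutes A}"
      then have "bij_betw (f\<^sub>0 \<circ> p) A B"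
        using permutes_imp_bij f\<^sub>0 bij_betw_trans by blast
      then show "restrict (f\<^sub>0 \<circ> p) A \<in> {f \<in> A \<rightarrow>\<^sub>E B. bij_betw f A B}"
        by (simp add: bij_betw_imp_funcset)
    qed
    show "?to_perm ` {f \<in> A \<rightarrow>\<^sub>E B. bij_betw f A B} \<subseteq> {p. p permutes A}"
    proof clarify
      fix f
      assume "bij_betw f A B"
      then have "bij_betw (?g\<^sub>0 \<circ> f) A A"
        using bij_betw_inv_into[OF f\<^sub>0] by (rule bij_betw_trans)
      then have "bij_betw (?to_perm f) A A"
        by (rule bij_betw_cong[THEN iffD1, rotated]) simp
      then show "?to_perm f permutes A"
        by (rule bij_imp_permutes) simp
    qed
  qed
qed

lemma card_bij_betw_PiE:
  assumes "finite A" "finite B" "card A = card B"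
  shows "card {f \<in> A \<rightarrow>\<^sub>E B. bij_betw f A B} = fact (card A)"
proof -
  obtain f\<^sub>0 where "bij_betw f\<^sub>0 A B"
    using finite_same_card_bij assms by blast
  then have "card {p. p permutes A} = card {f \<in> A \<rightarrow>\<^sub>E B. bij_betw f A B}"
    by (rule bij_betw_same_card[OF bij_betw_permutes_PiE])
  then show ?thesis
    using card_permutations[OF refl \<open>finite A\<close>] by simp
qed

lemma card_Collect_comp_bij_betw:
  assumes "bij_betw f A A"
  shows "card {x \<in> A. P (f x)} = card {x \<in> A. P x}"
proof -
  have "f ` {x \<in> A. P (f x)} = {x \<in> A. P x}"
    using assms by (auto simp: bij_betw_def)
  then have "bij_betw f {x \<in> A. P (f x)} {x \<in> A. P x}"
    using assms by (rule bij_betw_subset[rotated 2]) blast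
  then show ?thesis
    by (rule bij_betw_same_card)
qed

lemma card_Diff_UN_equicardinal:
  assumes "finite W" "\<And>j. j < a \<Longrightarrow> D j \<subseteq> W"
    and "\<And>i j. i < a \<Longrightarrow> j < a \<Longrightarrow> i \<noteq> j \<Longrightarrow> D i \<inter> D j = {}"
    and "\<And>j. j < a \<Longrightarrow> card (D j) = d"
  shows "card (W - (\<Union>j<a. D j)) + a * d = card W"
proof -
  have "finite (D j)" if "j < a" for j
    using assms(1,2) that finite_subset by blast
  then have "card (\<Union>j<a. D j) = (\<Sum>j<a. card (D j))"
    using assms(3) by (intro card_UN_disjoint) auto
  also have "\<dots> = a * d"
    using assms(4) by simp
  finally have card_UN: "card (\<Union>j<a. D j) = a * d" .
  have sub: "(\<Union>j<a. D j) \<subseteq> W"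
    using assms(2) by blast
  have "card (W - (\<Union>j<a. D j)) = card W - card (\<Union>j<a. D j)"
    by (rule card_Diff_subset[OF finite_subset[OF sub assms(1)] sub])
  moreover have "card (\<Union>j<a. D j) \<le> card W"
    by (rule card_mono[OF assms(1) sub])
  ultimately show ?thesis
    using card_UN by simp
qed

lemma finite_additive_decompositions:
  "finite {(\<beta>, \<gamma>). \<beta> + \<gamma> = (\<alpha> :: 'a \<Rightarrow>\<^sub>0 nat)}"
proof -
  let ?S = "{(\<beta>, \<gamma>). \<beta> + \<gamma> = \<alpha>}"
  let ?K = "Poly_Mapping.keys \<alpha>"
  let ?F = "{f. \<forall>i. (i \<in> ?K \<longrightarrow> f i \<in> (\<Union>j\<in>?K. {..Poly_Mapping.lookup \<alpha> j})) \<and> (i \<notin> ?K \<longrightarrow> f i = 0)}"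
  have "Poly_Mapping.lookup ` fst ` ?S \<subseteq> ?F"
  proof
    fix f
    assume "f \<in> Poly_Mapping.lookup ` fst ` ?S"
    then have bound: "f i \<le> Poly_Mapping.lookup \<alpha> i" for i
      by (auto simp: lookup_add)
    show "f \<in> ?F"
    proof (intro CollectI allI conjI impI)
      fix i
      show "f i \<in> (\<Union>j\<in>?K. {..Poly_Mapping.lookup \<alpha> j})" if "i \<in> ?K"
        using that bound[of i] by blast
      show "f i = 0" if "i \<notin> ?K"
        using that bound[of i] by (simp add: in_keys_iff)
    qed
  qed
  then have "finite (Poly_Mapping.lookup ` fst ` ?S)"
    by (rule finite_subset) (rule finite_set_of_finite_funs; simp)
  then have "finite (fst ` ?S)"
    by (rule finite_imageD) (simp add: inj_on_def poly_mapping_eqI)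
  moreover have "?S \<subseteq> (\<lambda>\<beta>. (\<beta>, \<alpha> - \<beta>)) ` fst ` ?S"
    by force
  ultimately show ?thesis
    using finite_subset by blast
qed

lemma sf_mult_cmult_left:
  "sf_mult (\<lambda>\<beta>. c * f \<beta>) g = (\<lambda>\<alpha>. c * sf_mult f g \<alpha>)"
  by (simp add: sf_mult_def sum_distrib_left mult.assoc)

section \<open>Colourings with a prescribed colour vector\<close>

(* The exponent vector of the monomial contributed by the colouring \<kappa> to X_G. *)
definition colour_vector :: "'v set \<Rightarrow> ('v \<Rightarrow> nat) \<Rightarrow> (nat \<Rightarrow>\<^sub>0 nat)" where
  "colour_vector V \<kappa> = Abs_poly_mapping (\<lambda>i. card {v\<in>V. \<kappa> v = i})"

lemma lookup_colour_vector:
  assumes "finite V"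
  shows "Poly_Mapping.lookup (colour_vector V \<kappa>) i = card {v\<in>V. \<kappa> v = i}"
proof -
  have "{i. card {v\<in>V. \<kappa> v = i} \<noteq> 0} \<subseteq> \<kappa> ` V"
    by (auto simp: card_eq_0_iff)
  then have "finite {i. card {v\<in>V. \<kappa> v = i} \<noteq> 0}"
    using assms finite_subset by blast
  then show ?thesis
    unfolding colour_vector_def by (simp add: Abs_poly_mapping_inverse)
qed

lemma colour_vector_cong:
  assumes "\<And>v. v \<in> V \<Longrightarrow> \<kappa> v = \<kappa>' v"
  shows "colour_vector V \<kappa> = colour_vector V \<kappa>'"
proof -
  have "{v\<in>V. \<kappa> v = i} = {v\<in>V. \<kappa>' v = i}" for i
    using assms by auto
  then show ?thesis
    by (simp add: colour_vector_def)
qed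

lemma colour_vector_restrict [simp]: "colour_vector V (restrict \<kappa> V) = colour_vector V \<kappa>"
  by (rule colour_vector_cong) simp

lemma colour_vector_Un:
  assumes "finite A" "finite B" "A \<inter> B = {}"
  shows "colour_vector (A \<union> B) \<kappa> = colour_vector A \<kappa> + colour_vector B \<kappa>"
proof (rule poly_mapping_eqI)
  fix i
  have "{v\<in>A \<union> B. \<kappa> v = i} = {v\<in>A. \<kappa> v = i} \<union> {v\<in>B. \<kappa> v = i}"
    by auto
  with assms have "card {v\<in>A \<union> B. \<kappa> v = i} = card {v\<in>A. \<kappa> v = i} + card {v\<in>B. \<kappa> v = i}"
    by (simp add: card_Un_disjoint disjoint_iff)
  with assms show "Poly_Mapping.lookup (colour_vector (A \<union> B) \<kappa>) i
      = Poly_Mapping.lookup (colour_vector A \<kappa> + colour_vector B \<kappa>) i"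
    by (simp add: lookup_colour_vector lookup_add)
qed

lemma colour_vector_comp_bij:
  assumes "bij_betw h V' V" "finite V"
  shows "colour_vector V' (\<kappa> \<circ> h) = colour_vector V \<kappa>"
proof (rule poly_mapping_eqI)
  fix i
  have "bij_betw h {v\<in>V'. \<kappa> (h v) = i} {v\<in>V. \<kappa> v = i}"
    by (rule bij_betw_subset[OF assms(1)]) (use assms(1) in \<open>auto simp: bij_betw_def\<close>)
  then have "card {v\<in>V'. \<kappa> (h v) = i} = card {v\<in>V. \<kappa> v = i}"
    by (rule bij_betw_same_card)
  moreover have "finite V'"
    using assms bij_betw_finite by blast
  ultimately show "Poly_Mapping.lookup (colour_vector V' (\<kappa> \<circ> h)) i = Poly_Mapping.lookup (colour_vector V \<kappa>) i"
    using assms(2) by (simp add: lookup_colour_vector)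
qed

lemma lookup_colour_vector_inj_on:
  assumes "finite C" "inj_on \<kappa> C"
  shows "Poly_Mapping.lookup (colour_vector C \<kappa>) i = (if i \<in> \<kappa> ` C then 1 else 0)"
proof (cases "i \<in> \<kappa> ` C")
  case True
  then obtain v where "v \<in> C" "i = \<kappa> v"
    by blast
  with assms(2) have "{u\<in>C. \<kappa> u = i} = {v}"
    by (auto simp: inj_on_def)
  with True assms(1) show ?thesis
    by (simp add: lookup_colour_vector)
next
  case False
  then have "{v\<in>C. \<kappa> v = i} = {}"
    by auto
  with False assms(1) show ?thesis
    by (simp only: lookup_colour_vector card.empty if_False)
qed

lemma colour_vector_inj_on_eq_iff:
  assumes "finite C" "inj_on \<kappa> C"
  shows "colour_vector C \<kappa> = \<beta> \<longleftrightarrow> (\<forall>i. Poly_Mapping.lookup \<beta> i \<le> 1) \<and> Poly_Mapping.keys \<beta> = \<kappa> ` C"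
proof
  assume "colour_vector C \<kappa> = \<beta>"
  with lookup_colour_vector_inj_on[OF assms]
  show "(\<forall>i. Poly_Mapping.lookup \<beta> i \<le> 1) \<and> Poly_Mapping.keys \<beta> = \<kappa> ` C"
    by (auto simp: in_keys_iff split: if_splits)
next
  assume \<beta>: "(\<forall>i. Poly_Mapping.lookup \<beta> i \<le> 1) \<and> Poly_Mapping.keys \<beta> = \<kappa> ` C"
  have "Poly_Mapping.lookup \<beta> i = (if i \<in> \<kappa> ` C then 1 else 0)" for i
  proof (cases "i \<in> \<kappa> ` C")
    case True
    with \<beta> have "i \<in> Poly_Mapping.keys \<beta>"
      by simp
    then have "Poly_Mapping.lookup \<beta> i \<noteq> 0"
      by (simp add: in_keys_iff)
    moreover have "Poly_Mapping.lookup \<beta> i \<le> 1"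
      using \<beta> by blast
    ultimately show ?thesis
      using True by simp
  next
    case False
    with \<beta> have "i \<notin> Poly_Mapping.keys \<beta>"
      by simp
    with False show ?thesis
      by (simp add: in_keys_iff)
  qed
  with lookup_colour_vector_inj_on[OF assms] show "colour_vector C \<kappa> = \<beta>"
    by (simp add: poly_mapping_eqI)
qed

lemma proper_col_cong:
  assumes "\<And>v. v \<in> V \<Longrightarrow> \<kappa> v = \<kappa>' v"
  shows "proper_col V E \<kappa> \<longleftrightarrow> proper_col V E \<kappa>'"
  using assms by (simp add: proper_col_def)

lemma proper_col_restrict [simp]: "proper_col V E (restrict \<kappa> V) \<longleftrightarrow> proper_col V E \<kappa>"
  by (rule proper_col_cong) simp

lemma proper_col_Un:
  assumes "\<And>u v. u \<in> A \<Longrightarrow> v \<in> B \<Longrightarrow> \<not> E u v \<and> \<not> E v u"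
  shows "proper_col (A \<union> B) E \<kappa> \<longleftrightarrow> proper_col A E \<kappa> \<and> proper_col B E \<kappa>"
  using assms unfolding proper_col_def by blast

definition colourings :: "'v set \<Rightarrow> ('v \<Rightarrow> 'v \<Rightarrow> bool) \<Rightarrow> (nat \<Rightarrow>\<^sub>0 nat) \<Rightarrow> ('v \<Rightarrow> nat) set" where
  "colourings V E \<alpha> = {\<kappa> \<in> V \<rightarrow>\<^sub>E UNIV. proper_col V E \<kappa> \<and> colour_vector V \<kappa> = \<alpha>}"

lemma chrom_sf_eq_card_colourings:
  assumes "finite V"
  shows "chrom_sf V E \<alpha> = of_nat (card (colourings V E \<alpha>))"
proof -
  have "colour_vector V \<kappa> = \<alpha> \<longleftrightarrow> (\<forall>i. card {v\<in>V. \<kappa> v = i} = Poly_Mapping.lookup \<alpha> i)" for \<kappa>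
    using assms by (simp add: poly_mapping_eq_iff fun_eq_iff lookup_colour_vector)
  then show ?thesis
    unfolding chrom_sf_def colourings_def by simp
qed

lemma finite_colourings:
  assumes "finite V"
  shows "finite (colourings V E \<alpha>)"
proof -
  have "\<kappa> v \<in> Poly_Mapping.keys \<alpha>" if "\<kappa> \<in> colourings V E \<alpha>" "v \<in> V" for \<kappa> v
  proof -
    have "{u\<in>V. \<kappa> u = \<kappa> v} \<noteq> {}"
      using that(2) by blast
    then have "card {u\<in>V. \<kappa> u = \<kappa> v} \<noteq> 0"
      using assms by simp
    then have "\<kappa> v \<in> Poly_Mapping.keys (colour_vector V \<kappa>)"
      using assms by (simp add: in_keys_iff lookup_colour_vector)
    with that(1) show ?thesis
      by (simp add: colourings_def)
  qed
  then have "colourings V E \<alpha> \<subseteq> V \<rightarrow>\<^sub>E Poly_Mapping.keys \<alpha>"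
    by (auto simp: colourings_def)
  then show ?thesis
    using assms by (meson finite_PiE finite_keys finite_subset)
qed

lemma colourings_edge_union:
  "colourings V (\<lambda>u v. E u v \<or> F u v) \<alpha> = {\<kappa> \<in> colourings V E \<alpha>. proper_col V F \<kappa>}"
  by (auto simp: colourings_def proper_col_def)

section \<open>Disjoint unions, isomorphisms and complete graphs\<close>

lemma bij_betw_colourings_disjoint_union:
  assumes A: "finite A" and B: "finite B" and disj: "A \<inter> B = {}"
    and no_edges: "\<And>u v. u \<in> A \<Longrightarrow> v \<in> B \<Longrightarrow> \<not> E u v \<and> \<not> E v u"
  shows "bij_betw (\<lambda>\<kappa>. ((colour_vector A \<kappa>, colour_vector B \<kappa>), (restrict \<kappa> A, restrict \<kappa> B)))
           (colourings (A \<union> B) E \<alpha>)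
           (SIGMA p:{(\<beta>, \<gamma>). \<beta> + \<gamma> = \<alpha>}. colourings A E (fst p) \<times> colourings B E (snd p))"
    (is "bij_betw ?split _ ?Pairs")
proof -
  have colour_vector_split: "colour_vector (A \<union> B) \<kappa> = colour_vector A \<kappa> + colour_vector B \<kappa>" for \<kappa>
    by (rule colour_vector_Un[OF A B disj])
  have proper_split: "proper_col (A \<union> B) E \<kappa> \<longleftrightarrow> proper_col A E \<kappa> \<and> proper_col B E \<kappa>" for \<kappa>
    by (rule proper_col_Un[OF no_edges])
  have split_join: "?split (join_on A \<kappa>\<^sub>1 \<kappa>\<^sub>2) = ((\<beta>, \<gamma>), (\<kappa>\<^sub>1, \<kappa>\<^sub>2))"
    and join_mem: "join_on A \<kappa>\<^sub>1 \<kappa>\<^sub>2 \<in> colourings (A \<union> B) E (\<beta> + \<gamma>)"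
    if "\<kappa>\<^sub>1 \<in> colourings A E \<beta>" "\<kappa>\<^sub>2 \<in> colourings B E \<gamma>" for \<kappa>\<^sub>1 \<kappa>\<^sub>2 \<beta> \<gamma>
  proof -
    have extensional: "\<kappa>\<^sub>1 \<in> A \<rightarrow>\<^sub>E UNIV" "\<kappa>\<^sub>2 \<in> B \<rightarrow>\<^sub>E UNIV"
      using that by (simp_all add: colourings_def)
    note restrict_A = restrict_join_on(1)[OF disj extensional]
      and restrict_B = restrict_join_on(2)[OF disj extensional]
    have "colour_vector A (join_on A \<kappa>\<^sub>1 \<kappa>\<^sub>2) = \<beta>" "proper_col A E (join_on A \<kappa>\<^sub>1 \<kappa>\<^sub>2)"
      using that(1) colour_vector_restrict[of A "join_on A \<kappa>\<^sub>1 \<kappa>\<^sub>2"]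
        proper_col_restrict[of A E "join_on A \<kappa>\<^sub>1 \<kappa>\<^sub>2"]
      by (simp_all add: restrict_A colourings_def)
    moreover have "colour_vector B (join_on A \<kappa>\<^sub>1 \<kappa>\<^sub>2) = \<gamma>" "proper_col B E (join_on A \<kappa>\<^sub>1 \<kappa>\<^sub>2)"
      using that(2) colour_vector_restrict[of B "join_on A \<kappa>\<^sub>1 \<kappa>\<^sub>2"]
        proper_col_restrict[of B E "join_on A \<kappa>\<^sub>1 \<kappa>\<^sub>2"]
      by (simp_all add: restrict_B colourings_def)
    moreover have "join_on A \<kappa>\<^sub>1 \<kappa>\<^sub>2 \<in> (A \<union> B) \<rightarrow>\<^sub>E UNIV"
      using extensional by (rule join_on_PiE)
    ultimately show "?split (join_on A \<kappa>\<^sub>1 \<kappa>\<^sub>2) = ((\<beta>, \<gamma>), (\<kappa>\<^sub>1, \<kappa>\<^sub>2))"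
      and "join_on A \<kappa>\<^sub>1 \<kappa>\<^sub>2 \<in> colourings (A \<union> B) E (\<beta> + \<gamma>)"
      using restrict_A restrict_B by (simp_all add: colourings_def colour_vector_split proper_split)
  qed
  have split_mem: "?split \<kappa> \<in> ?Pairs" if "\<kappa> \<in> colourings (A \<union> B) E \<alpha>" for \<kappa>
    using that by (auto simp: colourings_def proper_split colour_vector_split)
  have join_split: "join_on A (restrict \<kappa> A) (restrict \<kappa> B) = \<kappa>" if "\<kappa> \<in> colourings (A \<union> B) E \<alpha>" for \<kappa>
    using that unfolding colourings_def by (blast intro: join_on_restrict)
  show ?thesis
    by (rule bij_betw_byWitness[where f' = "\<lambda>q. join_on A (fst (snd q)) (snd (snd q))"])
      (use join_split split_join split_mem join_mem in force)+
qed

lemma chrom_sf_disjoint_union: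
  assumes "finite A" "finite B" "A \<inter> B = {}"
    and "\<And>u v. u \<in> A \<Longrightarrow> v \<in> B \<Longrightarrow> \<not> E u v \<and> \<not> E v u"
  shows "chrom_sf (A \<union> B) E = sf_mult (chrom_sf A E) (chrom_sf B E)"
proof
  fix \<alpha> :: "nat \<Rightarrow>\<^sub>0 nat"
  let ?S = "{(\<beta>, \<gamma>). \<beta> + \<gamma> = \<alpha>}"
  have "card (colourings (A \<union> B) E \<alpha>)
      = card (SIGMA p:?S. colourings A E (fst p) \<times> colourings B E (snd p))"
    using bij_betw_colourings_disjoint_union[OF assms] by (rule bij_betw_same_card)
  also have "\<dots> = (\<Sum>p\<in>?S. card (colourings A E (fst p) \<times> colourings B E (snd p)))"
    by (rule card_SigmaI) (simp_all add: finite_additive_decompositions finite_colourings assms(1,2))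
  also have "\<dots> = (\<Sum>p\<in>?S. card (colourings A E (fst p)) * card (colourings B E (snd p)))"
    by (simp add: card_cartesian_product)
  finally show "chrom_sf (A \<union> B) E \<alpha> = sf_mult (chrom_sf A E) (chrom_sf B E) \<alpha>"
    using assms(1,2) by (simp add: chrom_sf_eq_card_colourings sf_mult_def)
qed

lemma restrict_comp_mem_colourings:
  assumes h: "bij_betw h V' V" and "finite V"
    and hom: "\<And>u v. u \<in> V' \<Longrightarrow> v \<in> V' \<Longrightarrow> E' u v \<Longrightarrow> E (h u) (h v)"
    and \<kappa>: "\<kappa> \<in> colourings V E \<alpha>"
  shows "restrict (\<kappa> \<circ> h) V' \<in> colourings V' E' \<alpha>"
proof -
  have "proper_col V' E' (\<kappa> \<circ> h)"
    using \<kappa> hom bij_betw_apply[OF h] by (auto simp: colourings_def proper_col_def)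
  moreover have "colour_vector V' (restrict (\<kappa> \<circ> h) V') = \<alpha>"
    using \<kappa> colour_vector_comp_bij[OF h \<open>finite V\<close>] by (simp add: colourings_def)
  ultimately show ?thesis
    by (simp add: colourings_def)
qed

lemma bij_betw_colourings_iso:
  assumes h: "bij_betw h V' V" and "finite V"
    and iso: "\<And>u v. u \<in> V' \<Longrightarrow> v \<in> V' \<Longrightarrow> E' u v \<longleftrightarrow> E (h u) (h v)"
  shows "bij_betw (\<lambda>\<kappa>. restrict (\<kappa> \<circ> h) V') (colourings V E \<alpha>) (colourings V' E' \<alpha>)"
proof -
  let ?g = "inv_into V' h"
  have g: "bij_betw ?g V V'"
    by (rule bij_betw_inv_into[OF h])
  have "finite V'"
    using h \<open>finite V\<close> bij_betw_finite by blast
  have g_hom: "E' (?g u) (?g v)" if "u \<in> V" "v \<in> V" "E u v" for u v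
    using that iso[of "?g u" "?g v"] bij_betw_apply[OF g] bij_betw_inv_into_right[OF h] by simp
  have "restrict (restrict (\<kappa> \<circ> h) V' \<circ> ?g) V = \<kappa>" if "\<kappa> \<in> V \<rightarrow>\<^sub>E (UNIV :: nat set)" for \<kappa>
    using that bij_betw_apply[OF g] bij_betw_inv_into_right[OF h]
    by (auto simp: fun_eq_iff PiE_iff extensional_def)
  moreover have "restrict (restrict (\<kappa> \<circ> ?g) V \<circ> h) V' = \<kappa>" if "\<kappa> \<in> V' \<rightarrow>\<^sub>E (UNIV :: nat set)" for \<kappa>
    using that bij_betw_apply[OF h] bij_betw_inv_into_left[OF h]
    by (auto simp: fun_eq_iff PiE_iff extensional_def)
  moreover have "restrict (\<kappa> \<circ> h) V' \<in> colourings V' E' \<alpha>" if "\<kappa> \<in> colourings V E \<alpha>" for \<kappa>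
    using h \<open>finite V\<close> _ that by (rule restrict_comp_mem_colourings) (simp add: iso)
  moreover have "restrict (\<kappa> \<circ> ?g) V \<in> colourings V E \<alpha>" if "\<kappa> \<in> colourings V' E' \<alpha>" for \<kappa>
    using g \<open>finite V'\<close> g_hom that by (rule restrict_comp_mem_colourings)
  ultimately show ?thesis
    by (intro bij_betw_byWitness[where f' = "\<lambda>\<kappa>. restrict (\<kappa> \<circ> ?g) V"]) (auto simp: colourings_def)
qed

lemma chrom_sf_iso:
  assumes "bij_betw h V' V" "finite V"
    and "\<And>u v. u \<in> V' \<Longrightarrow> v \<in> V' \<Longrightarrow> E' u v \<longleftrightarrow> E (h u) (h v)"
  shows "chrom_sf V' E' = chrom_sf V E"
proof
  fix \<alpha> :: "nat \<Rightarrow>\<^sub>0 nat"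
  have "bij_betw (\<lambda>\<kappa>. restrict (\<kappa> \<circ> h) V') (colourings V E \<alpha>) (colourings V' E' \<alpha>)"
    by (intro bij_betw_colourings_iso assms)
  then have "card (colourings V' E' \<alpha>) = card (colourings V E \<alpha>)"
    by (simp add: bij_betw_same_card)
  moreover have "finite V'"
    using assms(1,2) bij_betw_finite by blast
  ultimately show "chrom_sf V' E' \<alpha> = chrom_sf V E \<alpha>"
    using assms(2) by (simp add: chrom_sf_eq_card_colourings)
qed

lemma colourings_complete:
  assumes "finite C" and complete: "\<And>u v. u \<in> C \<Longrightarrow> v \<in> C \<Longrightarrow> E u v \<longleftrightarrow> u \<noteq> v"
  shows "colourings C E \<beta> = (if \<forall>i. Poly_Mapping.lookup \<beta> i \<le> 1
           then {\<kappa> \<in> C \<rightarrow>\<^sub>E Poly_Mapping.keys \<beta>. bij_betw \<kappa> C (Poly_Mapping.keys \<beta>)} else {})"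
proof -
  have proper: "proper_col C E \<kappa> \<longleftrightarrow> inj_on \<kappa> C" for \<kappa>
    using complete unfolding proper_col_def inj_on_def by blast
  have "colourings C E \<beta> = {\<kappa> \<in> C \<rightarrow>\<^sub>E UNIV. inj_on \<kappa> C
      \<and> (\<forall>i. Poly_Mapping.lookup \<beta> i \<le> 1) \<and> Poly_Mapping.keys \<beta> = \<kappa> ` C}"
    unfolding colourings_def
    by (rule Collect_cong) (use proper colour_vector_inj_on_eq_iff[OF \<open>finite C\<close>] in blast)
  then show ?thesis
    by (auto simp: bij_betw_def PiE_iff)
qed

lemma sum_lookup_squarefree:
  assumes "\<forall>i. Poly_Mapping.lookup \<beta> i \<le> 1"
  shows "(\<Sum>i\<in>Poly_Mapping.keys \<beta>. Poly_Mapping.lookup \<beta> i) = card (Poly_Mapping.keys \<beta>)"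
proof -
  have "Poly_Mapping.lookup \<beta> i = 1" if "i \<in> Poly_Mapping.keys \<beta>" for i
    using assms that by (metis in_keys_iff le_antisym less_one not_le)
  then show ?thesis
    by simp
qed

lemma chrom_sf_complete:
  assumes "finite C" "\<And>u v. u \<in> C \<Longrightarrow> v \<in> C \<Longrightarrow> E u v \<longleftrightarrow> u \<noteq> v"
  shows "chrom_sf C E = (\<lambda>\<beta>. fact (card C) * elem_sf (card C) \<beta>)"
proof
  fix \<beta> :: "nat \<Rightarrow>\<^sub>0 nat"
  let ?K = "Poly_Mapping.keys \<beta>"
  consider (squarefree) "\<forall>i. Poly_Mapping.lookup \<beta> i \<le> 1" "card ?K = card C"
    | (wrong_degree) "\<forall>i. Poly_Mapping.lookup \<beta> i \<le> 1" "card ?K \<noteq> card C"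
    | (not_squarefree) "\<not> (\<forall>i. Poly_Mapping.lookup \<beta> i \<le> 1)"
    by blast
  then have "(of_nat (card (colourings C E \<beta>)) :: rat) = fact (card C) * elem_sf (card C) \<beta>"
  proof cases
    case squarefree
    then show ?thesis
      using card_bij_betw_PiE[OF \<open>finite C\<close> finite_keys, of \<beta>]
      by (simp add: colourings_complete assms elem_sf_def sum_lookup_squarefree)
  next
    case wrong_degree
    then have "\<not> bij_betw \<kappa> C ?K" for \<kappa>
      using bij_betw_same_card by fastforce
    with wrong_degree show ?thesis
      by (simp add: colourings_complete assms elem_sf_def sum_lookup_squarefree)
  next
    case not_squarefree
    then have "colourings C E \<beta> = {}"
      using colourings_complete[OF assms, of \<beta>] by auto
    moreover have "elem_sf (card C) \<beta> = 0"
      unfolding elem_sf_def using not_squarefree by (intro if_not_P) blast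
    ultimately show ?thesis
      by simp
  qed
  with \<open>finite C\<close> show "chrom_sf C E \<beta> = fact (card C) * elem_sf (card C) \<beta>"
    by (simp add: chrom_sf_eq_card_colourings)
qed

section \<open>A clique next to a path\<close>

(* On {0..<n}: the clique on 0, ..., a - 1 next to the path a, a + 1, ..., n - 1. *)
definition clique_path_E :: "nat \<Rightarrow> nat \<Rightarrow> nat \<Rightarrow> bool" where
  "clique_path_E a u v \<longleftrightarrow> (u < a \<and> v < a \<and> u \<noteq> v) \<or> ((u = v + 1 \<or> v = u + 1) \<and> a \<le> min u v)"

lemma chrom_sf_clique_path:
  assumes "a \<le> n"
  shows "chrom_sf {0..<n} (clique_path_E a)
       = (\<lambda>\<alpha>. fact a * sf_mult (elem_sf a) (chrom_sf (path_V (n - a)) path_E) \<alpha>)"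
proof -
  have "{0..<n} = {0..<a} \<union> {a..<n}"
    using assms by auto
  then have "chrom_sf {0..<n} (clique_path_E a)
      = sf_mult (chrom_sf {0..<a} (clique_path_E a)) (chrom_sf {a..<n} (clique_path_E a))"
    by (simp only:) (rule chrom_sf_disjoint_union; auto simp: clique_path_E_def)
  also have "chrom_sf {0..<a} (clique_path_E a) = (\<lambda>\<beta>. fact a * elem_sf a \<beta>)"
    using chrom_sf_complete[of "{0..<a}" "clique_path_E a"] by (simp add: clique_path_E_def)
  also have "chrom_sf {a..<n} (clique_path_E a) = chrom_sf (path_V (n - a)) path_E"
  proof (rule chrom_sf_iso[symmetric])
    show "bij_betw (\<lambda>v. v + a) (path_V (n - a)) {a..<n}"
      using assms by (auto simp: path_V_def bij_betw_def)
  qed (auto simp: path_E_def clique_path_E_def)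
  finally show ?thesis
    by (simp add: sf_mult_cmult_left)
qed

lemma lollipop_E_Suc_0: "lollipop_E (Suc 0) = clique_path_E 0"
  by (auto simp: fun_eq_iff lollipop_E_def clique_path_E_def)

lemma lollipop_E_Suc:
  "lollipop_E (Suc a) = (\<lambda>u v. clique_path_E a u v \<or> (u = a \<and> v < a \<or> v = a \<and> u < a))"
  by (auto simp: fun_eq_iff lollipop_E_def clique_path_E_def)

lemma lollipop_E_eq_clique_path_E:
  assumes "1 \<le> a"
  shows "lollipop_E a = (\<lambda>u v. clique_path_E a u v \<or> (u = a - 1 \<and> v = a \<or> v = a - 1 \<and> u = a))"
  using assms by (auto simp: fun_eq_iff lollipop_E_def clique_path_E_def)

lemma colourings_lollipop_E_Suc:
  assumes "a < n"
  shows "colourings {0..<n} (lollipop_E (Suc a)) \<alpha>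
       = {\<kappa> \<in> colourings {0..<n} (clique_path_E a) \<alpha>. \<forall>j<a. \<kappa> a \<noteq> \<kappa> j}"
proof -
  have "proper_col {0..<n} (\<lambda>u v. u = a \<and> v < a \<or> v = a \<and> u < a) \<kappa> \<longleftrightarrow> (\<forall>j<a. \<kappa> a \<noteq> \<kappa> j)" for \<kappa>
    using assms unfolding proper_col_def by (metis atLeastLessThan_iff le0 less_trans)
  then show ?thesis
    by (simp add: lollipop_E_Suc colourings_edge_union)
qed

lemma colourings_lollipop_E:
  assumes "1 \<le> a" "a < n"
  shows "colourings {0..<n} (lollipop_E a) \<alpha>
       = {\<kappa> \<in> colourings {0..<n} (clique_path_E a) \<alpha>. \<kappa> a \<noteq> \<kappa> (a - 1)}"
proof -
  have "a \<in> {0..<n}" "a - 1 \<in> {0..<n}"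
    using assms by auto
  then have "proper_col {0..<n} (\<lambda>u v. u = a - 1 \<and> v = a \<or> v = a - 1 \<and> u = a) \<kappa> \<longleftrightarrow> \<kappa> a \<noteq> \<kappa> (a - 1)" for \<kappa>
    unfolding proper_col_def by (metis (mono_tags, lifting))
  with assms(1) show ?thesis
    by (simp add: lollipop_E_eq_clique_path_E colourings_edge_union)
qed

lemma card_colourings_clique_path_same_colour:
  assumes "j < a" "a < n"
  shows "card {\<kappa> \<in> colourings {0..<n} (clique_path_E a) \<alpha>. \<kappa> a = \<kappa> j}
       = card {\<kappa> \<in> colourings {0..<n} (clique_path_E a) \<alpha>. \<kappa> a = \<kappa> (a - 1)}"
proof -
  let ?V = "{0..<n}" and ?W = "colourings {0..<n} (clique_path_E a) \<alpha>"
  let ?\<tau> = "Transposition.transpose j (a - 1)"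
  have "bij_betw ?\<tau> ?V ?V"
    using assms by simp
  moreover have "clique_path_E a u v \<longleftrightarrow> clique_path_E a (?\<tau> u) (?\<tau> v)" for u v
    using assms(1) by (auto simp: clique_path_E_def transpose_def)
  ultimately have "bij_betw (\<lambda>\<kappa>. restrict (\<kappa> \<circ> ?\<tau>) ?V) ?W ?W"
    by (intro bij_betw_colourings_iso) auto
  then have "card {\<kappa> \<in> ?W. restrict (\<kappa> \<circ> ?\<tau>) ?V a = restrict (\<kappa> \<circ> ?\<tau>) ?V (a - 1)}
      = card {\<kappa> \<in> ?W. \<kappa> a = \<kappa> (a - 1)}"
    by (rule card_Collect_comp_bij_betw)
  moreover have "restrict (\<kappa> \<circ> ?\<tau>) ?V a = \<kappa> a" "restrict (\<kappa> \<circ> ?\<tau>) ?V (a - 1) = \<kappa> j"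
    for \<kappa> :: "nat \<Rightarrow> nat"
    using assms by auto
  ultimately show ?thesis
    by simp
qed

lemma card_colourings_lollipop_E_Suc:
  assumes "1 \<le> a" "a < n"
  shows "card (colourings {0..<n} (lollipop_E (Suc a)) \<alpha>) + (a - 1) * card (colourings {0..<n} (clique_path_E a) \<alpha>)
       = a * card (colourings {0..<n} (lollipop_E a) \<alpha>)"
proof -
  define W where "W = colourings {0..<n} (clique_path_E a) \<alpha>"
  define D where "D j = {\<kappa> \<in> W. \<kappa> a = \<kappa> j}" for j
  have "finite W" and D_subset: "D j \<subseteq> W" for j
    by (auto simp: W_def D_def finite_colourings)
  have "colourings {0..<n} (lollipop_E (Suc a)) \<alpha> = W - (\<Union>j<a. D j)"
    using colourings_lollipop_E_Suc[OF assms(2)] by (auto simp: W_def D_def)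
  moreover have "colourings {0..<n} (lollipop_E a) \<alpha> = W - D (a - 1)"
    using colourings_lollipop_E[OF assms] by (auto simp: W_def D_def)
  moreover have "card (W - (\<Union>j<a. D j)) + a * card (D (a - 1)) = card W"
  proof (rule card_Diff_UN_equicardinal)
    show "D i \<inter> D j = {}" if "i < a" "j < a" "i \<noteq> j" for i j
      using that assms by (auto simp: D_def W_def colourings_def proper_col_def clique_path_E_def)
    show "card (D j) = card (D (a - 1))" if "j < a" for j
      unfolding D_def W_def using that assms(2) by (rule card_colourings_clique_path_same_colour)
  qed (use \<open>finite W\<close> D_subset in auto)
  moreover have "card (W - D (a - 1)) + card (D (a - 1)) = card W"
    using \<open>finite W\<close> D_subset by (metis card_Diff_subset card_mono finite_subset le_add_diff_inverse2)
  moreover have "x + (a - 1) * w = a * y" if "x + a * d = w" "y + d = w" for x y w d :: nat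
  proof -
    obtain b where "a = Suc b"
      using assms(1) by (cases a) auto
    with that(1) show ?thesis
      by (simp add: that(2)[symmetric] algebra_simps)
  qed
  ultimately show ?thesis
    unfolding W_def by metis
qed

lemma chrom_sf_lollipop_Suc:
  assumes "1 \<le> a" "a < n"
  shows "chrom_sf {0..<n} (lollipop_E (Suc a)) \<alpha>
       = of_nat a * chrom_sf {0..<n} (lollipop_E a) \<alpha> - (of_nat a - 1) * chrom_sf {0..<n} (clique_path_E a) \<alpha>"
proof -
  have "of_nat (card (colourings {0..<n} (lollipop_E (Suc a)) \<alpha>))
      + (of_nat a - 1) * of_nat (card (colourings {0..<n} (clique_path_E a) \<alpha>))
      = (of_nat a * of_nat (card (colourings {0..<n} (lollipop_E a) \<alpha>)) :: rat)"
    using arg_cong[OF card_colourings_lollipop_E_Suc[OF assms, of \<alpha>], of "of_nat :: nat \<Rightarrow> rat"] assms(1)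
    by simp
  then show ?thesis
    by (simp add: chrom_sf_eq_card_colourings algebra_simps)
qed

lemma sum_chrom_sf_clique_path:
  assumes "b < n"
  shows "(\<Sum>l=0..b. (1 - of_nat l) * chrom_sf {0..<n} (clique_path_E l) \<alpha> / fact l)
       = chrom_sf {0..<n} (lollipop_E (Suc b)) \<alpha> / fact b"
  using assms
proof (induction b)
  case 0
  then show ?case
    by (simp add: lollipop_E_Suc_0)
next
  case (Suc b)
  let ?X = "\<lambda>E. chrom_sf {0..<n} E \<alpha>"
  have "(\<Sum>l=0..Suc b. (1 - of_nat l) * ?X (clique_path_E l) / fact l)
      = ?X (lollipop_E (Suc b)) / fact b + (1 - of_nat (Suc b)) * ?X (clique_path_E (Suc b)) / fact (Suc b)"
    using Suc by simp
  also have "\<dots> = (of_nat (Suc b) * ?X (lollipop_E (Suc b)) - of_nat b * ?X (clique_path_E (Suc b))) / fact (Suc b)"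
    by (simp add: field_simps del: of_nat_Suc) (simp add: algebra_simps)
  also have "\<dots> = ?X (lollipop_E (Suc (Suc b))) / fact (Suc b)"
    using chrom_sf_lollipop_Suc[of "Suc b" n \<alpha>] Suc.prems by simp
  finally show ?case .
qed

lemma sum_chrom_sf_clique_path_complete:
  assumes "1 \<le> n"
  shows "(\<Sum>l=0..n. (1 - of_nat l) * chrom_sf {0..<n} (clique_path_E l) \<alpha> / fact l) = elem_sf n \<alpha>"
proof -
  obtain m where n: "n = Suc m"
    using assms by (cases n) auto
  let ?X = "\<lambda>E. chrom_sf {0..<n} E \<alpha>"
  have "chrom_sf {0..<n} (lollipop_E n) = (\<lambda>\<beta>. fact (card {0..<n}) * elem_sf (card {0..<n}) \<beta>)"
    "chrom_sf {0..<n} (clique_path_E n) = (\<lambda>\<beta>. fact (card {0..<n}) * elem_sf (card {0..<n}) \<beta>)"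
    by (rule chrom_sf_complete; auto simp: lollipop_E_def clique_path_E_def)+
  then have complete: "?X (lollipop_E n) = fact n * elem_sf n \<alpha>" "?X (clique_path_E n) = fact n * elem_sf n \<alpha>"
    by simp_all
  have "(\<Sum>l=0..n. (1 - of_nat l) * ?X (clique_path_E l) / fact l)
      = ?X (lollipop_E n) / fact m + (1 - of_nat n) * ?X (clique_path_E n) / fact n"
    using sum_chrom_sf_clique_path[of m n \<alpha>] by (simp add: n)
  also have "\<dots> = fact n * elem_sf n \<alpha> / fact m + (1 - of_nat n) * (fact n * elem_sf n \<alpha>) / fact n"
    by (simp only: complete)
  also have "\<dots> = elem_sf n \<alpha>"
  proof -
    have "fact n = of_nat n * (fact m :: rat)" "of_nat n \<noteq> (0 :: rat)"
      using n by simp_all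
    then show ?thesis
      by (simp add: field_simps)
  qed
  finally show ?thesis .
qed

theorem lemma4p4:
  fixes n a :: nat
  assumes "1 \<le> n" and "a \<le> n"
  shows "(\<lambda>\<alpha>. \<Sum>l=0..a. (1 - of_nat l) * sf_mult (elem_sf l) (chrom_sf (path_V (n - l)) path_E) \<alpha>)
       = (if a \<le> n - 1
          then (\<lambda>\<alpha>. chrom_sf (lollipop_V (a + 1) (n - 1 - a)) (lollipop_E (a + 1)) \<alpha> / fact a)
          else elem_sf n)"
proof -
  have summands: "(\<Sum>l=0..a. (1 - of_nat l) * sf_mult (elem_sf l) (chrom_sf (path_V (n - l)) path_E) \<alpha>)
      = (\<Sum>l=0..a. (1 - of_nat l) * chrom_sf {0..<n} (clique_path_E l) \<alpha> / fact l)" for \<alpha>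
    using assms(2) by (intro sum.cong) (simp_all add: chrom_sf_clique_path)
  show ?thesis
  proof (cases "a \<le> n - 1")
    case True
    moreover have "lollipop_V (a + 1) (n - 1 - a) = {0..<n}"
      using True assms(1) by (auto simp: lollipop_V_def)
    ultimately show ?thesis
      using assms(1) by (simp add: fun_eq_iff summands sum_chrom_sf_clique_path)
  next
    case False
    with assms have "a = n"
      by simp
    then show ?thesis
      using False summands sum_chrom_sf_clique_path_complete[OF assms(1)] by (simp add: fun_eq_iff)
  qed
qed

end
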